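(* There is a constant $C>0$ (depending only on $d_{\min}$ and $d_{\max}$) such that for all sufficiently large $n$, for every target set size $t$ and every choice of out-degrees, and for all $k$ with $(1-\frac{1}{e^2})n\le k\le n-1$, the probability that the reverse reachable set of $B$ has exactly $k$ vertices is at most $\frac{C}{n^2}$; i.e., it is $O(\frac{1}{n^2})$.
   Context: Random graph model: $V$ is a set of $n$ vertices, $B\subseteq V$ a target set with $|B|=t$, each $v\in V$ has a prescribed out-degree $d_v$ with $2\le d_{\min}\le d_v\le d_{\max}$ (constants independent of $n$), and for each $v$ independently its out-neighbour set is chosen uniformly at random among all $d_v$-element subsets of $V$. The reverse reachable set of $B$ is the set of vertices having a directed path to a vertex of $B$. *)

theory Defs
  imports "HOL-Probability.Probability"
begin

text \<open>Vertex set V = {..<n}. An out-neighbourhood assignment is a function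
  N :: nat => nat set; vertices outside V get the empty set (default of Pi_pmf).\<close>

definition out_nbhd_pmf :: "nat \<Rightarrow> nat \<Rightarrow> nat set pmf" where
  "out_nbhd_pmf n dv = pmf_of_set {S. S \<subseteq> {..<n} \<and> card S = dv}"

definition random_digraph :: "nat \<Rightarrow> (nat \<Rightarrow> nat) \<Rightarrow> (nat \<Rightarrow> nat set) pmf" where
  "random_digraph n d = Pi_pmf {..<n} {} (\<lambda>v. out_nbhd_pmf n (d v))"

definition edges :: "nat \<Rightarrow> (nat \<Rightarrow> nat set) \<Rightarrow> (nat \<times> nat) set" where
  "edges n N = {(u, w). u < n \<and> w \<in> N u}"

definition rev_reach :: "nat \<Rightarrow> (nat \<Rightarrow> nat set) \<Rightarrow> nat set \<Rightarrow> nat set" where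
  "rev_reach n N B = {u. u < n \<and> (\<exists>b\<in>B. (u, b) \<in> (edges n N)\<^sup>*)}"

end

theory Submission
  imports Defs
begin

text \<open>If the reverse reachable set of B has k vertices, its complement S, of size m = n - k,
  is closed: every out-neighbour of a vertex of S lies in S. A vertex of S chooses all of its
  d_v >= 2 out-neighbours inside S with probability at most (m/n)^2, and with probability 0 if
  m = 1. A union bound over the (n choose m) candidate sets S bounds the probability by
  (n choose m) (m/n)^(2m) <= (e m/n)^m. Since m <= n/e^2, the ratio e m/n is at most 1/e, so this
  is at most (e m/n)^2 e^(2-m) <= 2 e^4/n^2, using m^2 <= 2 e^m.\<close>

lemma power_div_fact_le_exp:
  fixes x :: real
  assumes "0 \<le> x"
  shows "x ^ k / fact k \<le> exp x"
proof -
  have "x ^ k / fact k = (\<Sum>i\<in>{k}. x ^ i /\<^sub>R fact i)" by (simp add: divide_inverse_commute)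
  also have "\<dots> \<le> (\<Sum>i. x ^ i /\<^sub>R fact i)"
    using exp_converges[of x] assms by (intro sum_le_suminf) (auto simp: sums_iff)
  also have "\<dots> = exp x" using exp_converges[of x] by (simp add: sums_iff)
  finally show ?thesis .
qed

lemma binomial_mult_power_le:
  assumes "0 < n"
  shows "real (n choose m) * (real m / real n) ^ (2 * m) \<le> (exp 1 * real m / real n) ^ m"
proof -
  have "real (n choose m) * fact m \<le> real n ^ m"
    using binomial_fact_pow[of n m] by (metis of_nat_fact of_nat_le_iff of_nat_mult of_nat_power)
  then have "real (n choose m) * (real m / real n) ^ (2 * m)
      \<le> real n ^ m / fact m * (real m / real n) ^ (2 * m)"
    by (intro mult_right_mono) (auto simp: le_divide_eq)
  also have "\<dots> = real m ^ m / fact m * (real m / real n) ^ m"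
    using assms by (simp add: power_mult power_divide power2_eq_square power_mult_distrib field_simps)
  also have "\<dots> \<le> exp (real m) * (real m / real n) ^ m"
    by (intro mult_right_mono power_div_fact_le_exp) auto
  also have "\<dots> = (exp 1 * real m / real n) ^ m"
    by (simp add: power_mult_distrib power_divide flip: exp_of_nat_mult)
  finally show ?thesis .
qed

lemma exp_mult_ratio_power_le:
  assumes m: "2 \<le> m" and mn: "exp 2 * real m \<le> real n"
  shows "(exp 1 * real m / real n) ^ m \<le> 2 * exp 4 / (real n)\<^sup>2"
proof -
  have "0 < exp 2 * real m" using m by simp
  then have n: "real n > 0" using mn by linarith
  define x where "x = exp 1 * real m / real n"
  have "exp 2 = exp 1 * exp (1::real)" by (simp flip: exp_add)
  then have x: "0 \<le> x" "x \<le> exp (-1)"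
    using mn n by (auto simp: x_def field_simps exp_minus)
  have "x ^ m = x\<^sup>2 * x ^ (m - 2)"
    using m by (metis le_add_diff_inverse power_add)
  also have "\<dots> \<le> x\<^sup>2 * exp (-1) ^ (m - 2)"
    using x by (intro mult_left_mono power_mono) auto
  also have "\<dots> = (exp 2 * (real m)\<^sup>2 / (real n)\<^sup>2) * (exp 2 / exp (real m))"
  proof -
    have "x\<^sup>2 = exp 2 * (real m)\<^sup>2 / (real n)\<^sup>2"
      by (simp add: x_def power_mult_distrib power_divide flip: exp_of_nat_mult)
    moreover have "exp (-1) ^ (m - 2) = exp 2 / exp (real m)"
      using m by (simp add: of_nat_diff flip: exp_of_nat_mult exp_diff)
    ultimately show ?thesis by simp
  qed
  also have "\<dots> = exp 4 * ((real m)\<^sup>2 / exp (real m)) / (real n)\<^sup>2"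
    by (simp add: field_simps flip: exp_add)
  also have "\<dots> \<le> exp 4 * 2 / (real n)\<^sup>2"
  proof -
    have "(real m)\<^sup>2 / exp (real m) \<le> 2"
      using power_div_fact_le_exp[of "real m" 2] by (simp add: divide_le_eq mult.commute)
    then show ?thesis by (intro divide_right_mono mult_left_mono) auto
  qed
  finally show ?thesis by (simp only: x_def mult.commute)
qed

lemma card_subsets_lessThan: "card {S. S \<subseteq> {..<n} \<and> card S = d} = n choose d"
  using n_subsets[of "{..<n}" d] by simp

lemma card_subsets_lessThan_nonempty:
  assumes "d \<le> n"
  shows "{S. S \<subseteq> {..<n} \<and> card S = d} \<noteq> {}"
  using assms card_subsets_lessThan[of n d] by (metis card.empty zero_less_binomial less_irrefl)

lemma set_pmf_out_nbhd_pmf: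
  assumes "d \<le> n"
  shows "set_pmf (out_nbhd_pmf n d) = {S. S \<subseteq> {..<n} \<and> card S = d}"
  unfolding out_nbhd_pmf_def using card_subsets_lessThan_nonempty[OF assms] by simp

lemma prob_out_nbhd_subset:
  assumes "S \<subseteq> {..<n}" "d \<le> n"
  shows "measure_pmf.prob (out_nbhd_pmf n d) (Pow S) = real (card S choose d) / real (n choose d)"
proof -
  have "{X. X \<subseteq> {..<n} \<and> card X = d} \<inter> Pow S = {X. X \<subseteq> S \<and> card X = d}"
    using assms(1) by auto
  moreover have "card {X. X \<subseteq> S \<and> card X = d} = card S choose d"
    using assms(1) by (intro n_subsets) (auto intro: finite_subset)
  ultimately show ?thesis
    unfolding out_nbhd_pmf_def using card_subsets_lessThan_nonempty[OF assms(2)]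
    by (simp add: measure_pmf_of_set card_subsets_lessThan)
qed

lemma binomial_ratio_le_power:
  assumes "m \<le> n"
  shows "real (m choose d) / real (n choose d) \<le> (real m / real n) ^ d"
proof (cases "d \<le> m")
  case False
  then show ?thesis by (simp add: binomial_eq_0)
next
  case True
  have "real (m choose d) / real (n choose d) =
      (\<Prod>i = 0..<d. (real (m - i) / real (d - i)) / (real (n - i) / real (d - i)))"
    using True assms by (simp add: binomial_altdef_of_nat prod_dividef)
  also have "\<dots> = (\<Prod>i = 0..<d. real (m - i) / real (n - i))"
    by (intro prod.cong) auto
  also have "\<dots> \<le> (\<Prod>i = 0..<d. real m / real n)"
  proof (rule prod_mono)
    fix i assume "i \<in> {0..<d}"
    then have i: "i < d" "0 < real (n - i)" "0 < real n" using True assms by auto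
    have "real (m - i) * real n \<le> real m * real (n - i)"
      using i True assms by (simp add: of_nat_diff algebra_simps mult_left_mono)
    then show "0 \<le> real (m - i) / real (n - i) \<and> real (m - i) / real (n - i) \<le> real m / real n"
      using i by (simp add: field_simps)
  qed
  finally show ?thesis by simp
qed

lemma prob_out_nbhd_subset_le:
  assumes "S \<subseteq> {..<n}" "2 \<le> d" "d \<le> n"
  shows "measure_pmf.prob (out_nbhd_pmf n d) (Pow S) \<le> (real (card S) / real n)\<^sup>2"
proof -
  have "card S \<le> n" using assms(1) by (metis card_lessThan card_mono finite_lessThan)
  then have "measure_pmf.prob (out_nbhd_pmf n d) (Pow S) \<le> (real (card S) / real n) ^ d"
    using prob_out_nbhd_subset[OF assms(1,3)] binomial_ratio_le_power by simp
  also have "\<dots> \<le> (real (card S) / real n)\<^sup>2"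
    using \<open>card S \<le> n\<close> assms(2) by (intro power_decreasing) (auto simp: divide_le_eq)
  finally show ?thesis .
qed

lemma prob_out_nbhd_subset_eq_0:
  assumes "S \<subseteq> {..<n}" "card S < d" "d \<le> n"
  shows "measure_pmf.prob (out_nbhd_pmf n d) (Pow S) = 0"
  using prob_out_nbhd_subset[OF assms(1,3)] assms(2) by (simp add: binomial_eq_0)

lemma random_digraph_out_nbhd_subset:
  assumes "N \<in> set_pmf (random_digraph n d)" "v < n" "d v \<le> n"
  shows "N v \<subseteq> {..<n}"
proof -
  have "N \<in> PiE_dflt {..<n} {} (set_pmf \<circ> (\<lambda>v. out_nbhd_pmf n (d v)))"
    using assms(1) by (simp add: random_digraph_def set_Pi_pmf)
  then have "N v \<in> set_pmf (out_nbhd_pmf n (d v))"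
    using assms(2) by (simp add: PiE_dflt_def)
  then show ?thesis using set_pmf_out_nbhd_pmf[OF assms(3)] by auto
qed

lemma out_nbhd_subset_compl_rev_reach:
  assumes "N v \<subseteq> {..<n}" "v \<in> {..<n} - rev_reach n N B"
  shows "N v \<subseteq> {..<n} - rev_reach n N B"
proof
  fix w assume w: "w \<in> N v"
  have "w \<notin> rev_reach n N B"
  proof
    assume "w \<in> rev_reach n N B"
    then obtain b where "b \<in> B" "(w, b) \<in> (edges n N)\<^sup>*" by (auto simp: rev_reach_def)
    moreover have "(v, w) \<in> edges n N" using assms(2) w by (auto simp: edges_def)
    ultimately have "v \<in> rev_reach n N B"
      using assms(2) by (auto simp: rev_reach_def intro: converse_rtrancl_into_rtrancl)
    then show False using assms(2) by simp
  qed
  then show "w \<in> {..<n} - rev_reach n N B" using assms(1) w by auto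
qed

lemma prob_random_digraph_closed:
  assumes "S \<subseteq> {..<n}"
  shows "measure_pmf.prob (random_digraph n d) {N. \<forall>v\<in>S. N v \<subseteq> S}
    = (\<Prod>v\<in>S. measure_pmf.prob (out_nbhd_pmf n (d v)) (Pow S))"
proof -
  have "{N. \<forall>v\<in>S. N v \<subseteq> S} = Pi {..<n} (\<lambda>v. if v \<in> S then Pow S else UNIV)"
    using assms by (auto simp: Pi_def)
  then have "measure_pmf.prob (random_digraph n d) {N. \<forall>v\<in>S. N v \<subseteq> S}
      = (\<Prod>v\<in>{..<n}. measure_pmf.prob (out_nbhd_pmf n (d v)) (if v \<in> S then Pow S else UNIV))"
    by (simp add: random_digraph_def measure_Pi_pmf_Pi)
  also have "\<dots> = (\<Prod>v\<in>{..<n}. if v \<in> S then measure_pmf.prob (out_nbhd_pmf n (d v)) (Pow S) else 1)"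
    by (intro prod.cong) auto
  also have "\<dots> = (\<Prod>v\<in>S. measure_pmf.prob (out_nbhd_pmf n (d v)) (Pow S))"
    using assms by (simp add: prod.If_cases Int_absorb1)
  finally show ?thesis .
qed

lemma prob_random_digraph_closed_le:
  assumes "S \<subseteq> {..<n}" "\<forall>v\<in>S. 2 \<le> d v \<and> d v \<le> n"
  shows "measure_pmf.prob (random_digraph n d) {N. \<forall>v\<in>S. N v \<subseteq> S}
    \<le> (real (card S) / real n) ^ (2 * card S)"
proof -
  have "measure_pmf.prob (random_digraph n d) {N. \<forall>v\<in>S. N v \<subseteq> S}
      = (\<Prod>v\<in>S. measure_pmf.prob (out_nbhd_pmf n (d v)) (Pow S))"
    using assms(1) by (rule prob_random_digraph_closed)
  also have "\<dots> \<le> (\<Prod>v\<in>S. (real (card S) / real n)\<^sup>2)"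
    using assms by (intro prod_mono) (simp add: prob_out_nbhd_subset_le)
  also have "\<dots> = (real (card S) / real n) ^ (2 * card S)"
    by (simp add: power_mult)
  finally show ?thesis .
qed

lemma prob_random_digraph_closed_singleton:
  assumes "S \<subseteq> {..<n}" "card S = 1" "\<forall>v\<in>S. 2 \<le> d v \<and> d v \<le> n"
  shows "measure_pmf.prob (random_digraph n d) {N. \<forall>v\<in>S. N v \<subseteq> S} = 0"
proof -
  obtain v where v: "S = {v}" using assms(2) card_1_singletonE by blast
  then have "measure_pmf.prob (random_digraph n d) {N. \<forall>v\<in>S. N v \<subseteq> S}
      = measure_pmf.prob (out_nbhd_pmf n (d v)) (Pow S)"
    using prob_random_digraph_closed[OF assms(1)] by simp
  also have "\<dots> = 0"
    using assms v by (intro prob_out_nbhd_subset_eq_0) auto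
  finally show ?thesis .
qed

lemma prob_card_rev_reach_le_sum:
  assumes "\<forall>v<n. d v \<le> n"
  shows "measure_pmf.prob (random_digraph n d) {N. card (rev_reach n N B) = k}
    \<le> (\<Sum>S | S \<subseteq> {..<n} \<and> card S = n - k. measure_pmf.prob (random_digraph n d) {N. \<forall>v\<in>S. N v \<subseteq> S})"
proof -
  let ?p = "random_digraph n d"
  let ?F = "{S. S \<subseteq> {..<n} \<and> card S = n - k}"
  have "{N. card (rev_reach n N B) = k} \<inter> set_pmf ?p \<subseteq> (\<Union>S\<in>?F. {N. \<forall>v\<in>S. N v \<subseteq> S})"
  proof
    fix N assume "N \<in> {N. card (rev_reach n N B) = k} \<inter> set_pmf ?p"
    then have N: "N \<in> set_pmf ?p" and k: "k = card (rev_reach n N B)" by auto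
    let ?S = "{..<n} - rev_reach n N B"
    have "rev_reach n N B \<subseteq> {..<n}" by (auto simp: rev_reach_def)
    then have "card ?S = n - k" using k by (simp add: card_Diff_subset finite_subset)
    moreover have "\<forall>v\<in>?S. N v \<subseteq> ?S"
    proof
      fix v assume v: "v \<in> ?S"
      then have "N v \<subseteq> {..<n}" using N assms by (intro random_digraph_out_nbhd_subset) auto
      then show "N v \<subseteq> ?S" using v by (rule out_nbhd_subset_compl_rev_reach)
    qed
    ultimately have "?S \<in> ?F" "N \<in> {N. \<forall>v\<in>?S. N v \<subseteq> ?S}" by auto
    then show "N \<in> (\<Union>S\<in>?F. {N. \<forall>v\<in>S. N v \<subseteq> S})" by (rule UN_I)
  qed
  then have "measure_pmf.prob ?p ({N. card (rev_reach n N B) = k} \<inter> set_pmf ?p)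
      \<le> measure_pmf.prob ?p (\<Union>S\<in>?F. {N. \<forall>v\<in>S. N v \<subseteq> S})"
    by (rule measure_pmf.finite_measure_mono) simp
  then have "measure_pmf.prob ?p {N. card (rev_reach n N B) = k}
      \<le> measure_pmf.prob ?p (\<Union>S\<in>?F. {N. \<forall>v\<in>S. N v \<subseteq> S})"
    by (simp add: measure_Int_set_pmf)
  also have "\<dots> \<le> (\<Sum>S\<in>?F. measure_pmf.prob ?p {N. \<forall>v\<in>S. N v \<subseteq> S})"
    by (rule measure_UNION_le) auto
  finally show ?thesis .
qed

lemma prob_card_rev_reach_le:
  assumes deg: "\<forall>v<n. 2 \<le> d v \<and> d v \<le> n" and "k < n" and tail: "exp 2 * real (n - k) \<le> real n"
  shows "measure_pmf.prob (random_digraph n d) {N. card (rev_reach n N B) = k} \<le> 2 * exp 4 / (real n)\<^sup>2"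
proof -
  let ?closed = "\<lambda>S. measure_pmf.prob (random_digraph n d) {N. \<forall>v\<in>S. N v \<subseteq> S}"
  let ?F = "{S. S \<subseteq> {..<n} \<and> card S = n - k}"
  have "measure_pmf.prob (random_digraph n d) {N. card (rev_reach n N B) = k} \<le> (\<Sum>S\<in>?F. ?closed S)"
    using deg by (intro prob_card_rev_reach_le_sum) auto
  also have "\<dots> \<le> 2 * exp 4 / (real n)\<^sup>2"
  proof (cases "n - k = 1")
    case True
    then have "(\<Sum>S\<in>?F. ?closed S) = 0"
      using deg by (intro sum.neutral ballI prob_random_digraph_closed_singleton) auto
    then show ?thesis by simp
  next
    case False
    then have "2 \<le> n - k" using \<open>k < n\<close> by simp
    have "(\<Sum>S\<in>?F. ?closed S) \<le> (\<Sum>S\<in>?F. (real (n - k) / real n) ^ (2 * (n - k)))"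
    proof (rule sum_mono)
      fix S assume "S \<in> ?F"
      then show "?closed S \<le> (real (n - k) / real n) ^ (2 * (n - k))"
        using deg prob_random_digraph_closed_le[of S n d] by auto
    qed
    also have "\<dots> = real (n choose (n - k)) * (real (n - k) / real n) ^ (2 * (n - k))"
      by (simp add: card_subsets_lessThan)
    also have "\<dots> \<le> (exp 1 * real (n - k) / real n) ^ (n - k)"
      using \<open>k < n\<close> by (intro binomial_mult_power_le) simp
    also have "\<dots> \<le> 2 * exp 4 / (real n)\<^sup>2"
      using \<open>2 \<le> n - k\<close> tail by (rule exp_mult_ratio_power_le)
    finally show ?thesis .
  qed
  finally show ?thesis .
qed

theorem lemma18:
  fixes dmin dmax :: nat
  assumes "2 \<le> dmin" and "dmin \<le> dmax"
  shows "\<exists>C::real. C > 0 \<and> (\<exists>N0::nat. \<forall>n\<ge>N0. \<forall>(B::nat set) (d::nat \<Rightarrow> nat) (k::nat).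
     B \<subseteq> {..<n} \<longrightarrow> (\<forall>v<n. dmin \<le> d v \<and> d v \<le> dmax) \<longrightarrow>
     (1 - 1 / exp 2) * real n \<le> real k \<longrightarrow> k \<le> n - 1 \<longrightarrow>
     measure_pmf.prob (random_digraph n d) {N. card (rev_reach n N B) = k} \<le> C / (real n)^2)"
proof -
  have "measure_pmf.prob (random_digraph n d) {N. card (rev_reach n N B) = k} \<le> 2 * exp 4 / (real n)\<^sup>2"
    if "dmax + 1 \<le> n" "\<forall>v<n. dmin \<le> d v \<and> d v \<le> dmax"
      and k: "(1 - 1 / exp 2) * real n \<le> real k" "k \<le> n - 1" for n d k and B :: "nat set"
  proof (rule prob_card_rev_reach_le)
    show "\<forall>v<n. 2 \<le> d v \<and> d v \<le> n" "k < n" using that assms(1) by force+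
    then have "real (n - k) \<le> real n / exp 2" using k(1) by (simp add: of_nat_diff algebra_simps)
    then show "exp 2 * real (n - k) \<le> real n" by (simp add: pos_le_divide_eq mult.commute)
  qed
  then show ?thesis by (intro exI[of _ "2 * exp 4"] conjI exI[of _ "dmax + 1"]) auto
qed

end
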